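(* $[\mathbf{Txt}\mathbf{Sd}\mathbf{Ex}] \setminus [\mathcal{R}\mathbf{Txt}\mathbf{Sd}\mathbf{Ex}] \neq \emptyset$; that is, there is a class of languages that can be $\mathbf{Txt}\mathbf{Sd}\mathbf{Ex}$-learned by some (possibly partial) computable learner but by no total computable learner.
   Context: Fix an acceptable numbering $(\varphi_e)$ of partial computable functions, $W_e=\mathrm{dom}(\varphi_e)$. A text is a total function $T:\mathbb N\to\mathbb N\cup\{\#\}$, $\mathrm{content}(T)=\mathrm{range}(T)\setminus\{\#\}$, $T[n]=(T(0),\dots,T(n-1))$; $\mathbf{Txt}(L)$ is the set of texts with content $L$. Learners are partial computable functions; $\mathbf{Sd}(h,T)(i)=h(\mathrm{content}(T[i]))$. For total $p$ and text $T$: $\mathbf{Ex}(p,T)$ iff $\exists n_0\,\forall n\ge n_0: p(n)=p(n_0)\wedge W_{p(n_0)}=\mathrm{content}(T)$. $h$ $\mathbf{Txt}\mathbf{Sd}\mathbf{Ex}$-learns $L$ iff for every $T\in\mathbf{Txt}(L)$, $\mathbf{Sd}(h,T)$ is total and $\mathbf{Ex}(\mathbf{Sd}(h,T),T)$. $[\mathbf{Txt}\mathbf{Sd}\mathbf{Ex}]$ is the set of classes learnable by a single learner; $[\mathcal R\mathbf{Txt}\mathbf{Sd}\mathbf{Ex}]$ is the same with the learner required to be a total computable function ($\mathcal R$ = total computable functions). *)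

theory Defs
  imports Main "HOL-Library.Nat_Bijection"
begin

text \<open>Partial recursive function terms (untyped, lenient arity).\<close>
datatype recf =
    Z
  | S
  | Id nat
  | Cn recf "recf list"
  | Pr recf recf
  | Mn recf

inductive eval :: "recf \<Rightarrow> nat list \<Rightarrow> nat \<Rightarrow> bool" where
  eval_Z: "eval Z xs 0"
| eval_S: "eval S (x # xs) (Suc x)"
| eval_Id: "i < length xs \<Longrightarrow> eval (Id i) xs (xs ! i)"
| eval_Cn: "length ys = length gs \<Longrightarrow> (\<forall>i < length gs. eval (gs ! i) xs (ys ! i))
            \<Longrightarrow> eval f ys y \<Longrightarrow> eval (Cn f gs) xs y"
| eval_Pr0: "eval f xs y \<Longrightarrow> eval (Pr f g) (0 # xs) y"
| eval_PrS: "eval (Pr f g) (n # xs) y \<Longrightarrow> eval g (n # y # xs) z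
            \<Longrightarrow> eval (Pr f g) (Suc n # xs) z"
| eval_Mn: "eval f (n # xs) 0 \<Longrightarrow> (\<forall>m < n. \<exists>v. eval f (m # xs) (Suc v))
            \<Longrightarrow> eval (Mn f) xs n"

fun code :: "recf \<Rightarrow> nat" where
  "code Z = prod_encode (0, 0)"
| "code S = prod_encode (1, 0)"
| "code (Id i) = prod_encode (2, i)"
| "code (Cn f gs) = prod_encode (3, prod_encode (code f, list_encode (map code gs)))"
| "code (Pr f g) = prod_encode (4, prod_encode (code f, code g))"
| "code (Mn f) = prod_encode (5, code f)"

definition partial_computable :: "(nat \<Rightarrow> nat option) \<Rightarrow> bool" where
  "partial_computable g \<longleftrightarrow> (\<exists>f. \<forall>x y. g x = Some y \<longleftrightarrow> eval f [x] y)"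

definition total_computable :: "(nat \<Rightarrow> nat option) \<Rightarrow> bool" where
  "total_computable g \<longleftrightarrow> partial_computable g \<and> (\<forall>x. g x \<noteq> None)"

definition phi :: "nat \<Rightarrow> nat \<Rightarrow> nat option" where
  "phi e x = (if \<exists>y f. code f = e \<and> eval f [x] y
              then Some (THE y. \<exists>f. code f = e \<and> eval f [x] y) else None)"

definition W :: "nat \<Rightarrow> nat set" where
  "W e = {x. phi e x \<noteq> None}"

text \<open>A text is a total function nat => nat option; None plays the role of the pause symbol.\<close>
type_synonym lang_text = "nat \<Rightarrow> nat option"

definition content :: "lang_text \<Rightarrow> nat set" where
  "content T = {x. \<exists>n. T n = Some x}"

text \<open>content (T[n]) for the initial segment T[n] = (T 0, ..., T (n-1)).\<close>
definition content_prefix :: "lang_text \<Rightarrow> nat \<Rightarrow> nat set" where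
  "content_prefix T n = {x. \<exists>m < n. T m = Some x}"

text \<open>Canonical index of a finite set, used to feed finite sets to learners.\<close>
definition canon :: "nat set \<Rightarrow> nat" where
  "canon D = (\<Sum>x\<in>D. 2 ^ x)"

definition Sd :: "(nat \<Rightarrow> nat option) \<Rightarrow> lang_text \<Rightarrow> nat \<Rightarrow> nat option" where
  "Sd h T i = h (canon (content_prefix T i))"

definition Ex_conv :: "(nat \<Rightarrow> nat) \<Rightarrow> lang_text \<Rightarrow> bool" where
  "Ex_conv p T \<longleftrightarrow> (\<exists>n0. \<forall>n \<ge> n0. p n = p n0 \<and> W (p n0) = content T)"

definition TxtSdEx_learns :: "(nat \<Rightarrow> nat option) \<Rightarrow> nat set \<Rightarrow> bool" where
  "TxtSdEx_learns h L \<longleftrightarrow>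
     (\<forall>T. content T = L \<longrightarrow> (\<forall>i. Sd h T i \<noteq> None) \<and> Ex_conv (\<lambda>i. the (Sd h T i)) T)"

definition TxtSdEx :: "nat set set \<Rightarrow> bool" where
  "TxtSdEx \<L> \<longleftrightarrow> (\<exists>h. partial_computable h \<and> (\<forall>L\<in>\<L>. TxtSdEx_learns h L))"

definition R_TxtSdEx :: "nat set set \<Rightarrow> bool" where
  "R_TxtSdEx \<L> \<longleftrightarrow> (\<exists>h. total_computable h \<and> (\<forall>L\<in>\<L>. TxtSdEx_learns h L))"

end

theory Submission
  imports Defs
begin

text \<open>The learner reads off the column \<open>p\<close>, the first component of the least element of
  its finite input \<open>D\<close>, and runs the program with code \<open>p\<close> on \<open>(p, canon D)\<close> through a
  universal term that searches for certificates of evaluations. A total computable learner \<open>g\<close>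
  is then defeated on the column of a program that knows its own code: this program proposes the
  whole column until \<open>g\<close> outputs the same index on two consecutive initial segments of the
  column, and proposes each of these two segments on itself. If \<open>g\<close> never repeats, our learner
  identifies the column while \<open>g\<close> changes its mind forever along its increasing enumeration;
  otherwise our learner identifies both segments, which \<open>g\<close> confuses.\<close>

inductive_cases eval_ZE [elim!]: "eval Z xs y"
inductive_cases eval_SE [elim!]: "eval S xs y"
inductive_cases eval_IdE [elim!]: "eval (Id i) xs y"
inductive_cases eval_CnE: "eval (Cn f gs) xs y"
inductive_cases eval_Pr0E: "eval (Pr f g) (0 # xs) y"
inductive_cases eval_PrSucE: "eval (Pr f g) (Suc n # xs) y"
inductive_cases eval_MnE: "eval (Mn f) xs y"

lemma eval_deterministic: "eval f xs y \<Longrightarrow> eval f xs z \<Longrightarrow> y = z"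
proof (induction arbitrary: z rule: eval.induct)
  case (eval_Cn ys gs xs f y)
  from eval_Cn.prems obtain ys' where ys': "length ys' = length gs"
    "\<forall>i<length gs. eval (gs ! i) xs (ys' ! i)" "eval f ys' z"
    by (rule eval_CnE)
  then have "ys' = ys"
    using eval_Cn.hyps(1) eval_Cn.IH(1) by (intro nth_equalityI) auto
  with ys'(3) eval_Cn.IH(2) show ?case by blast
next
  case (eval_Mn f n xs)
  from eval_Mn.prems have "eval f (z # xs) 0" "\<forall>m<z. \<exists>v. eval f (m # xs) (Suc v)"
    by (auto elim: eval_MnE)
  with eval_Mn.IH show ?case
    by (cases n z rule: linorder_cases) blast+
next
  case (eval_Pr0 f xs y g)
  then show ?case by (blast elim: eval_Pr0E)
next
  case (eval_PrS f g n xs y z')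
  then show ?case by (blast elim: eval_PrSucE)
qed auto

lemma eval_Cn_iff:
  assumes "length vs = length gs" "\<forall>i<length gs. eval (gs ! i) xs (vs ! i)"
  shows "eval (Cn f gs) xs y \<longleftrightarrow> eval f vs y"
proof
  assume "eval (Cn f gs) xs y"
  then obtain ws where ws: "length ws = length gs" "\<forall>i<length gs. eval (gs ! i) xs (ws ! i)" "eval f ws y"
    by (rule eval_CnE)
  have "ws = vs"
    using ws(1,2) assms by (intro nth_equalityI) (auto intro: eval_deterministic)
  with ws(3) show "eval f vs y"
    by simp
qed (use assms in \<open>rule eval_Cn\<close>)

lemma eval_Mn_iff: "eval (Mn f) xs y \<longleftrightarrow> eval f (y # xs) 0 \<and> (\<forall>m<y. \<exists>v. eval f (m # xs) (Suc v))"
  by (auto elim: eval_MnE intro: eval_Mn)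

lemma inj_code: "inj code"
proof (rule injI)
  show "code f = code g \<Longrightarrow> f = g" for f g
  proof (induction f arbitrary: g)
    case (Cn f gs)
    then obtain f' gs' where g: "g = Cn f' gs'" "code f = code f'" "map code gs = map code gs'"
      by (cases g) (auto simp: list_encode_eq)
    have "gs = gs'"
      using Cn.IH(2) g(3) by (rule list.inj_map_strong)
    with g Cn.IH(1) show ?case by blast
  next
    case Z then show ?case by (cases g) auto
  next
    case S then show ?case by (cases g) auto
  next
    case (Id i) then show ?case by (cases g) auto
  next
    case (Pr f1 f2) then show ?case by (cases g) auto
  next
    case (Mn f) then show ?case by (cases g) auto
  qed
qed

lemma phi_code_eq_Some: "phi (code f) x = Some y \<longleftrightarrow> eval f [x] y"
proof -
  have "(\<exists>g. code g = code f \<and> eval g [x] z) \<longleftrightarrow> eval f [x] z" for z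
    using inj_code by (auto dest: injD)
  then show ?thesis
    unfolding phi_def using eval_deterministic by (auto intro: the_equality theI)
qed

lemma partial_computable_phi_code: "partial_computable (phi (code f))"
  unfolding partial_computable_def phi_code_eq_Some by blast

lemma W_code: "W (code f) = {x. \<exists>y. eval f [x] y}"
  unfolding W_def using phi_code_eq_Some by fastforce

section \<open>Total recursive functions\<close>

definition recursive :: "nat \<Rightarrow> (nat list \<Rightarrow> nat) \<Rightarrow> bool" where
  "recursive k F \<longleftrightarrow> (\<exists>f. \<forall>xs. length xs = k \<longrightarrow> eval f xs (F xs))"

definition decidable :: "nat \<Rightarrow> (nat list \<Rightarrow> bool) \<Rightarrow> bool" where
  "decidable k P \<longleftrightarrow> recursive k (\<lambda>xs. of_bool (P xs))"

definition recf_of :: "nat \<Rightarrow> (nat list \<Rightarrow> nat) \<Rightarrow> recf" where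
  "recf_of k F = (SOME f. \<forall>xs. length xs = k \<longrightarrow> eval f xs (F xs))"

lemma eval_recf_of:
  assumes "recursive k F" and "length xs = k"
  shows "eval (recf_of k F) xs (F xs)"
proof -
  have "\<forall>xs. length xs = k \<longrightarrow> eval (recf_of k F) xs (F xs)"
    using assms(1) unfolding recursive_def recf_of_def by (rule someI_ex)
  with assms(2) show ?thesis by blast
qed

primrec const_recf :: "nat \<Rightarrow> recf" where
  "const_recf 0 = Z"
| "const_recf (Suc n) = Cn S [const_recf n]"

lemma eval_const_recf: "eval (const_recf n) xs n"
proof (induction n)
  case (Suc n)
  then show ?case
    by (auto intro!: eval_Cn[where ys="[n]"] eval_S)
qed (simp add: eval_Z)

lemma recursive_const: "recursive k (\<lambda>xs. n)"
  unfolding recursive_def using eval_const_recf by blast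

lemma recursive_proj: "i < k \<Longrightarrow> recursive k (\<lambda>xs. xs ! i)"
  unfolding recursive_def by (auto intro: eval_Id)

lemma recursive_cong: "recursive k F \<Longrightarrow> (\<And>xs. length xs = k \<Longrightarrow> F xs = G xs) \<Longrightarrow> recursive k G"
  unfolding recursive_def by metis

lemma recursive_compose:
  assumes "recursive m G" and "length Hs = m" and "\<forall>H\<in>set Hs. recursive k H"
  shows "recursive k (\<lambda>xs. G (map (\<lambda>H. H xs) Hs))"
proof -
  obtain g where g: "\<forall>ys. length ys = m \<longrightarrow> eval g ys (G ys)"
    using assms(1) unfolding recursive_def by blast
  have "eval (Cn g (map (recf_of k) Hs)) xs (G (map (\<lambda>H. H xs) Hs))" if "length xs = k" for xs
    using that g assms(2,3) by (intro eval_Cn[where ys="map (\<lambda>H. H xs) Hs"]) (auto intro: eval_recf_of)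
  then show ?thesis
    unfolding recursive_def by blast
qed

lemma recursive_compose1:
  assumes "recursive 1 (\<lambda>ys. F (ys ! 0))" and "recursive k A"
  shows "recursive k (\<lambda>xs. F (A xs))"
  using recursive_compose[OF assms(1), of "[A]" k] assms(2) by simp

lemma recursive_compose2:
  assumes "recursive 2 (\<lambda>ys. F (ys ! 0) (ys ! 1))" and "recursive k A" "recursive k B"
  shows "recursive k (\<lambda>xs. F (A xs) (B xs))"
  using recursive_compose[OF assms(1), of "[A, B]" k] assms(2,3) by simp

lemma recursive_reindex:
  assumes "recursive (length js) F" and "\<forall>j\<in>set js. j < k"
  shows "recursive k (\<lambda>xs. F (map ((!) xs) js))"
  using recursive_compose[OF assms(1), of "map (\<lambda>j xs. xs ! j) js" k] assms(2)
  by (simp add: comp_def recursive_proj)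

lemma recursive_tl:
  assumes "recursive k F"
  shows "recursive (Suc k) (\<lambda>xs. F (tl xs))"
proof -
  have tl: "map ((!) xs) (map Suc [0..<k]) = tl xs" if "length xs = Suc k" for xs :: "nat list"
    using that by (intro nth_equalityI) (auto simp: nth_tl)
  have "recursive (Suc k) (\<lambda>xs. F (map ((!) xs) (map Suc [0..<k])))"
    using recursive_reindex[of "map Suc [0..<k]" F "Suc k"] assms by simp
  then show ?thesis
    by (rule recursive_cong) (simp only: tl)
qed

lemma recursive_drop_second:
  assumes "recursive (Suc k) F"
  shows "recursive (Suc (Suc k)) (\<lambda>xs. F (xs ! 0 # tl (tl xs)))"
proof -
  have tl2: "map ((!) xs) (map (Suc \<circ> Suc) [0..<k]) = tl (tl xs)" if "length xs = Suc (Suc k)"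
    for xs :: "nat list"
    using that by (intro nth_equalityI) (auto simp: nth_tl)
  have "recursive (Suc (Suc k)) (\<lambda>xs. F (map ((!) xs) (0 # map (Suc \<circ> Suc) [0..<k])))"
    using recursive_reindex[of "0 # map (Suc \<circ> Suc) [0..<k]" F "Suc (Suc k)"] assms by simp
  then show ?thesis
    by (rule recursive_cong) (simp only: list.map tl2)
qed

lemma recursive_nth_tl: "Suc i < k \<Longrightarrow> recursive k (\<lambda>xs. tl xs ! i)"
  by (rule recursive_cong[OF recursive_proj[of "Suc i" k]]) (auto simp: nth_tl)

lemma recursive_nth_tl_tl: "Suc (Suc i) < k \<Longrightarrow> recursive k (\<lambda>xs. tl (tl xs) ! i)"
  by (rule recursive_cong[OF recursive_proj[of "Suc (Suc i)" k]]) (auto simp: nth_tl)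

lemma eval_Pr_rec_nat:
  assumes "eval b xs B" and "\<And>i r. eval s (i # r # xs) (Sf i r)"
  shows "eval (Pr b s) (n # xs) (rec_nat B Sf n)"
  by (induction n) (use assms in \<open>auto intro: eval_Pr0 eval_PrS\<close>)

lemma recursive_rec_nat:
  assumes "recursive k N" "recursive k B"
    and "recursive (Suc (Suc k)) (\<lambda>ys. Sf (ys ! 0) (ys ! 1) (tl (tl ys)))"
  shows "recursive k (\<lambda>xs. rec_nat (B xs) (\<lambda>i r. Sf i r xs) (N xs))"
proof -
  obtain b where b: "\<forall>ys. length ys = k \<longrightarrow> eval b ys (B ys)"
    using assms(2) unfolding recursive_def by blast
  obtain s where s: "\<forall>ys. length ys = Suc (Suc k) \<longrightarrow> eval s ys (Sf (ys ! 0) (ys ! 1) (tl (tl ys)))"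
    using assms(3) unfolding recursive_def by blast
  have "recursive (Suc k) (\<lambda>ys. rec_nat (B (tl ys)) (\<lambda>i r. Sf i r (tl ys)) (ys ! 0))"
    unfolding recursive_def
  proof (intro exI allI impI)
    fix ys :: "nat list"
    assume "length ys = Suc k"
    then obtain n xs where ys: "ys = n # xs" and "length xs = k"
      by (cases ys) auto
    then show "eval (Pr b s) ys (rec_nat (B (tl ys)) (\<lambda>i r. Sf i r (tl ys)) (ys ! 0))"
      using b s[rule_format, of "_ # _ # xs"] by (auto intro: eval_Pr_rec_nat)
  qed
  then have "recursive k (\<lambda>xs. (\<lambda>ys. rec_nat (B (tl ys)) (\<lambda>i r. Sf i r (tl ys)) (ys ! 0))
      (map (\<lambda>H. H xs) (N # map (\<lambda>j xs. xs ! j) [0..<k])))"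
    by (rule recursive_compose) (auto intro: assms(1) recursive_proj)
  moreover have "map ((!) xs) [0..<k] = xs" if "length xs = k" for xs :: "nat list"
    using that map_nth[of xs] by simp
  ultimately show ?thesis
    by (elim recursive_cong) (simp add: comp_def)
qed

lemma recursive_Suc: "recursive k A \<Longrightarrow> recursive k (\<lambda>xs. Suc (A xs))"
proof -
  have "recursive 1 (\<lambda>ys. Suc (ys ! 0))"
    unfolding recursive_def by (auto intro!: exI[of _ S] eval_S simp: length_Suc_conv)
  then show "recursive k A \<Longrightarrow> recursive k (\<lambda>xs. Suc (A xs))"
    by (rule recursive_compose1)
qed

lemma recursive_add: "recursive k A \<Longrightarrow> recursive k B \<Longrightarrow> recursive k (\<lambda>xs. A xs + B xs)"
proof -
  have eq: "rec_nat b (\<lambda>i r. Suc r) n = n + b" for b n :: nat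
    by (induction n) auto
  have "recursive 2 (\<lambda>ys. rec_nat (ys ! 1) (\<lambda>i r. Suc r) (ys ! 0))"
    by (rule recursive_rec_nat; intro recursive_proj recursive_Suc; simp)
  then have "recursive 2 (\<lambda>ys. ys ! 0 + ys ! 1)"
    by (simp only: eq)
  then show "recursive k A \<Longrightarrow> recursive k B \<Longrightarrow> recursive k (\<lambda>xs. A xs + B xs)"
    by (rule recursive_compose2)
qed

lemma recursive_pred: "recursive k A \<Longrightarrow> recursive k (\<lambda>xs. A xs - 1)"
proof -
  have eq: "rec_nat 0 (\<lambda>i r. i) n = n - 1" for n :: nat
    by (cases n) auto
  have "recursive 1 (\<lambda>ys. rec_nat 0 (\<lambda>i r. i) (ys ! 0))"
    by (rule recursive_rec_nat; intro recursive_proj recursive_const; simp)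
  then have "recursive 1 (\<lambda>ys. ys ! 0 - 1)"
    by (simp only: eq)
  then show "recursive k A \<Longrightarrow> recursive k (\<lambda>xs. A xs - 1)"
    by (rule recursive_compose1[where F="\<lambda>x. x - 1"])
qed

lemma recursive_diff: "recursive k A \<Longrightarrow> recursive k B \<Longrightarrow> recursive k (\<lambda>xs. A xs - B xs)"
proof -
  have eq: "rec_nat x (\<lambda>i r. r - 1) n = x - n" for x n :: nat
    by (induction n) auto
  have "recursive 2 (\<lambda>ys. rec_nat (ys ! 0) (\<lambda>i r. r - 1) (ys ! 1))"
    by (rule recursive_rec_nat; intro recursive_pred recursive_proj; simp)
  then have "recursive 2 (\<lambda>ys. ys ! 0 - ys ! 1)"
    by (simp only: eq)
  then show "recursive k A \<Longrightarrow> recursive k B \<Longrightarrow> recursive k (\<lambda>xs. A xs - B xs)"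
    by (rule recursive_compose2)
qed

lemma recursive_mult: "recursive k A \<Longrightarrow> recursive k B \<Longrightarrow> recursive k (\<lambda>xs. A xs * B xs)"
proof -
  have eq: "rec_nat 0 (\<lambda>i r. r + x) n = n * x" for x n :: nat
    by (induction n) auto
  have "recursive 2 (\<lambda>ys. rec_nat 0 (\<lambda>i r. r + ys ! 1) (ys ! 0))"
    by (rule recursive_rec_nat; intro recursive_add recursive_proj recursive_nth_tl_tl recursive_const; simp)
  then have "recursive 2 (\<lambda>ys. ys ! 0 * ys ! 1)"
    by (simp only: eq)
  then show "recursive k A \<Longrightarrow> recursive k B \<Longrightarrow> recursive k (\<lambda>xs. A xs * B xs)"
    by (rule recursive_compose2)
qed

lemma recursive_power2: "recursive k A \<Longrightarrow> recursive k (\<lambda>xs. 2 ^ A xs)"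
proof -
  have eq: "rec_nat 1 (\<lambda>i r. r + r) n = (2::nat) ^ n" for n
    by (induction n) auto
  have "recursive 1 (\<lambda>ys. rec_nat 1 (\<lambda>i r. r + r) (ys ! 0))"
    by (rule recursive_rec_nat; intro recursive_add recursive_proj recursive_const; simp)
  then have "recursive 1 (\<lambda>ys. 2 ^ (ys ! 0))"
    by (simp only: eq)
  then show "recursive k A \<Longrightarrow> recursive k (\<lambda>xs. 2 ^ A xs)"
    by (rule recursive_compose1)
qed

lemma recursive_triangle: "recursive k A \<Longrightarrow> recursive k (\<lambda>xs. triangle (A xs))"
proof -
  have eq: "rec_nat 0 (\<lambda>i r. r + Suc i) n = triangle n" for n
    by (induction n) auto
  have "recursive 1 (\<lambda>ys. rec_nat 0 (\<lambda>i r. r + Suc i) (ys ! 0))"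
    by (rule recursive_rec_nat; intro recursive_add recursive_Suc recursive_proj recursive_const; simp)
  then have "recursive 1 (\<lambda>ys. triangle (ys ! 0))"
    by (simp only: eq)
  then show "recursive k A \<Longrightarrow> recursive k (\<lambda>xs. triangle (A xs))"
    by (rule recursive_compose1)
qed

lemma recursive_If:
  assumes "decidable k P" "recursive k A" "recursive k B"
  shows "recursive k (\<lambda>xs. if P xs then A xs else B xs)"
proof -
  have "recursive k (\<lambda>xs. A xs * of_bool (P xs) + B xs * (1 - of_bool (P xs)))"
    by (intro recursive_add recursive_mult recursive_diff recursive_const
        assms(2,3) assms(1)[unfolded decidable_def])
  then show ?thesis
    by (rule recursive_cong) simp
qed

lemma decidable_eq: "recursive k A \<Longrightarrow> recursive k B \<Longrightarrow> decidable k (\<lambda>xs. A xs = B xs)"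
proof -
  assume "recursive k A" "recursive k B"
  then have "recursive k (\<lambda>xs. 1 - ((A xs - B xs) + (B xs - A xs)))"
    by (intro recursive_add recursive_diff recursive_const)
  then show ?thesis
    unfolding decidable_def by (rule recursive_cong) simp
qed

lemma decidable_less: "recursive k A \<Longrightarrow> recursive k B \<Longrightarrow> decidable k (\<lambda>xs. A xs < B xs)"
proof -
  assume "recursive k A" "recursive k B"
  then have "recursive k (\<lambda>xs. 1 - (1 - (B xs - A xs)))"
    by (intro recursive_diff recursive_const)
  then show ?thesis
    unfolding decidable_def by (rule recursive_cong) simp
qed

lemma decidable_not: "decidable k P \<Longrightarrow> decidable k (\<lambda>xs. \<not> P xs)"
  unfolding decidable_def
proof -
  assume "recursive k (\<lambda>xs. of_bool (P xs))"
  then have "recursive k (\<lambda>xs. 1 - of_bool (P xs))"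
    by (intro recursive_diff recursive_const)
  then show "recursive k (\<lambda>xs. of_bool (\<not> P xs))"
    by (rule recursive_cong) simp
qed

lemma decidable_conj: "decidable k P \<Longrightarrow> decidable k Q \<Longrightarrow> decidable k (\<lambda>xs. P xs \<and> Q xs)"
  unfolding decidable_def
proof -
  assume "recursive k (\<lambda>xs. of_bool (P xs))" "recursive k (\<lambda>xs. of_bool (Q xs))"
  then have "recursive k (\<lambda>xs. of_bool (P xs) * of_bool (Q xs))"
    by (rule recursive_mult)
  then show "recursive k (\<lambda>xs. of_bool (P xs \<and> Q xs))"
    by (rule recursive_cong) simp
qed

lemma decidable_disj: "decidable k P \<Longrightarrow> decidable k Q \<Longrightarrow> decidable k (\<lambda>xs. P xs \<or> Q xs)"
  using decidable_not[OF decidable_conj[OF decidable_not decidable_not]] by simp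

lemma decidable_bex:
  assumes "recursive k N" and "decidable (Suc k) (\<lambda>ys. P (ys ! 0) (tl ys))"
  shows "decidable k (\<lambda>xs. \<exists>i<N xs. P i xs)"
proof -
  have eq: "rec_nat 0 (\<lambda>i r. of_bool (r = 1 \<or> P i xs)) n = of_bool (\<exists>i<n. P i xs)" for n xs
    by (induction n) (auto simp: less_Suc_eq)
  have "decidable (Suc (Suc k)) (\<lambda>ys. P (ys ! 0) (tl (tl ys)))"
    using recursive_drop_second[OF assms(2)[unfolded decidable_def]] unfolding decidable_def by simp
  then have "decidable (Suc (Suc k)) (\<lambda>ys. ys ! 1 = 1 \<or> P (ys ! 0) (tl (tl ys)))"
    by (intro decidable_disj decidable_eq recursive_proj recursive_const) auto
  then have "recursive k (\<lambda>xs. rec_nat 0 (\<lambda>i r. of_bool (r = 1 \<or> P i xs)) (N xs))"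
    unfolding decidable_def by (rule recursive_rec_nat[OF assms(1) recursive_const])
  then show ?thesis
    unfolding decidable_def eq .
qed

lemma decidable_ball:
  assumes "recursive k N" and "decidable (Suc k) (\<lambda>ys. P (ys ! 0) (tl ys))"
  shows "decidable k (\<lambda>xs. \<forall>i<N xs. P i xs)"
  using decidable_not[OF decidable_bex[OF assms(1) decidable_not[OF assms(2)]]] by simp

definition bounded_min :: "nat \<Rightarrow> (nat \<Rightarrow> bool) \<Rightarrow> nat" where
  "bounded_min n P = (if \<exists>i<n. P i then LEAST i. P i else n)"

lemma bounded_min_eqI: "P m \<Longrightarrow> m < n \<Longrightarrow> (\<forall>i<m. \<not> P i) \<Longrightarrow> bounded_min n P = m"
  unfolding bounded_min_def by (auto intro!: Least_equality) (meson not_less)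

lemma bounded_min_none: "\<forall>i<n. \<not> P i \<Longrightarrow> bounded_min n P = n"
  unfolding bounded_min_def by auto

lemma bounded_min_Suc:
  "bounded_min (Suc n) P = (if bounded_min n P < n then bounded_min n P else if P n then n else Suc n)"
proof (cases "\<exists>i<n. P i")
  case True
  then have "(LEAST i. P i) < n"
    using Least_le[of P] by (meson le_less_trans)
  with True show ?thesis
    unfolding bounded_min_def by (auto simp: less_Suc_eq)
next
  case False
  then show ?thesis
    using bounded_min_eqI[of P n "Suc n"] bounded_min_none[of n P] bounded_min_none[of "Suc n" P]
    by (auto simp: less_Suc_eq)
qed

lemma recursive_bounded_min:
  assumes "recursive k N" and "decidable (Suc k) (\<lambda>ys. P (ys ! 0) (tl ys))"
  shows "recursive k (\<lambda>xs. bounded_min (N xs) (\<lambda>i. P i xs))"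
proof -
  have eq: "rec_nat 0 (\<lambda>i r. if r < i then r else if P i xs then i else Suc i) n = bounded_min n (\<lambda>i. P i xs)"
    for n xs
    by (induction n) (simp_all add: bounded_min_Suc bounded_min_none)
  have "decidable (Suc (Suc k)) (\<lambda>ys. P (ys ! 0) (tl (tl ys)))"
    using recursive_drop_second[OF assms(2)[unfolded decidable_def]] unfolding decidable_def by simp
  then have "recursive k (\<lambda>xs. rec_nat 0 (\<lambda>i r. if r < i then r else if P i xs then i else Suc i) (N xs))"
    by (intro recursive_rec_nat assms(1) recursive_const recursive_If decidable_less recursive_proj recursive_Suc)
       auto
  then show ?thesis
    unfolding eq .
qed

definition minimize :: "nat \<Rightarrow> (nat \<Rightarrow> nat list \<Rightarrow> bool) \<Rightarrow> recf" where
  "minimize k P = Mn (recf_of (Suc k) (\<lambda>ys. of_bool (\<not> P (ys ! 0) (tl ys))))"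

lemma eval_minimize:
  assumes "decidable (Suc k) (\<lambda>ys. P (ys ! 0) (tl ys))" and "length xs = k"
  shows "eval (minimize k P) xs y \<longleftrightarrow> P y xs \<and> (\<forall>m<y. \<not> P m xs)"
proof -
  let ?test = "recf_of (Suc k) (\<lambda>ys. of_bool (\<not> P (ys ! 0) (tl ys)))"
  have "recursive (Suc k) (\<lambda>ys. of_bool (\<not> P (ys ! 0) (tl ys)))"
    using decidable_not[OF assms(1)] unfolding decidable_def .
  then have "eval ?test (m # xs) (of_bool (\<not> P m xs))" for m
    using eval_recf_of[of "Suc k" _ "m # xs"] assms(2) by fastforce
  then have test: "eval ?test (m # xs) v \<longleftrightarrow> v = of_bool (\<not> P m xs)" for m v
    using eval_deterministic by blast
  show ?thesis
    unfolding minimize_def eval_Mn_iff test by auto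
qed

section \<open>Pairing and encoded lists\<close>

definition pfst :: "nat \<Rightarrow> nat" where
  "pfst z = fst (prod_decode z)"

definition psnd :: "nat \<Rightarrow> nat" where
  "psnd z = snd (prod_decode z)"

lemma pfst_prod_encode [simp]: "pfst (prod_encode (a, b)) = a"
  and psnd_prod_encode [simp]: "psnd (prod_encode (a, b)) = b"
  by (simp_all add: pfst_def psnd_def)

lemma prod_encode_pfst_psnd [simp]: "prod_encode (pfst z, psnd z) = z"
  by (simp add: pfst_def psnd_def)

lemma prod_encode_0_0: "prod_encode (0, 0) = 0"
  unfolding prod_encode_def by simp

lemma recursive_prod_encode:
  assumes "recursive k A" "recursive k B"
  shows "recursive k (\<lambda>xs. prod_encode (A xs, B xs))"
proof -
  have "recursive k (\<lambda>xs. triangle (A xs + B xs) + A xs)"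
    by (intro recursive_add recursive_triangle assms)
  then show ?thesis
    by (rule recursive_cong) (simp add: prod_encode_def)
qed

text \<open>The Cantor pairing enumerates the diagonals \<open>a + b = s\<close> one after the other; the diagonal of
  \<open>z\<close> is the least \<open>s\<close> with \<open>z < triangle (Suc s)\<close>.\<close>
definition diagonal :: "nat \<Rightarrow> nat" where
  "diagonal z = bounded_min (Suc z) (\<lambda>s. z < triangle (Suc s))"

lemma triangle_mono: "m \<le> n \<Longrightarrow> triangle m \<le> triangle n"
  by (induction n) (auto simp: le_Suc_eq)

lemma le_triangle: "n \<le> triangle n"
  by (induction n) auto

lemma diagonal_prod_encode: "diagonal (prod_encode (a, b)) = a + b"
proof -
  have z: "prod_encode (a, b) = triangle (a + b) + a"
    by (simp add: prod_encode_def)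
  have "\<not> triangle (a + b) + a < triangle (Suc i)" if "i < a + b" for i
    using that triangle_mono[of "Suc i" "a + b"] by simp
  then show ?thesis
    unfolding diagonal_def z using le_triangle[of "a + b"] by (intro bounded_min_eqI) auto
qed

lemma pfst_eq: "pfst z = z - triangle (diagonal z)"
  and psnd_eq: "psnd z = diagonal z - (z - triangle (diagonal z))"
proof -
  obtain a b where z: "z = prod_encode (a, b)"
    by (metis prod_encode_pfst_psnd)
  then have "pfst z = a" "psnd z = b" "triangle (diagonal z) = triangle (a + b)" "diagonal z = a + b"
    by (simp_all add: diagonal_prod_encode)
  moreover have "z = triangle (a + b) + a"
    using z by (simp add: prod_encode_def)
  ultimately show "pfst z = z - triangle (diagonal z)" "psnd z = diagonal z - (z - triangle (diagonal z))"
    by linarith+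
qed

lemma recursive_diagonal: "recursive k A \<Longrightarrow> recursive k (\<lambda>xs. diagonal (A xs))"
proof -
  have "recursive 1 (\<lambda>ys. diagonal (ys ! 0))"
    unfolding diagonal_def
    by (rule recursive_bounded_min[where P="\<lambda>s xs. xs ! 0 < triangle (Suc s)"];
        intro recursive_Suc recursive_proj decidable_less recursive_triangle recursive_nth_tl; simp)
  then show "recursive k A \<Longrightarrow> recursive k (\<lambda>xs. diagonal (A xs))"
    by (rule recursive_compose1)
qed

lemma recursive_pfst: "recursive k A \<Longrightarrow> recursive k (\<lambda>xs. pfst (A xs))"
  unfolding pfst_eq by (intro recursive_diff recursive_triangle recursive_diagonal)

lemma recursive_psnd: "recursive k A \<Longrightarrow> recursive k (\<lambda>xs. psnd (A xs))"
  unfolding psnd_eq by (intro recursive_diff recursive_triangle recursive_diagonal)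

definition enc_hd :: "nat \<Rightarrow> nat" where
  "enc_hd L = pfst (L - 1)"

definition enc_tl :: "nat \<Rightarrow> nat" where
  "enc_tl L = psnd (L - 1)"

definition enc_Cons :: "nat \<Rightarrow> nat \<Rightarrow> nat" where
  "enc_Cons x L = Suc (prod_encode (x, L))"

definition enc_drop :: "nat \<Rightarrow> nat \<Rightarrow> nat" where
  "enc_drop i L = (enc_tl ^^ i) L"

definition enc_nth :: "nat \<Rightarrow> nat \<Rightarrow> nat" where
  "enc_nth L i = enc_hd (enc_drop i L)"

definition enc_length :: "nat \<Rightarrow> nat" where
  "enc_length L = bounded_min (Suc L) (\<lambda>i. enc_drop i L = 0)"

lemma enc_hd_Suc_prod_encode [simp]: "enc_hd (Suc (prod_encode (x, L))) = x"
  by (simp add: enc_hd_def)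

lemma enc_tl_Suc_prod_encode [simp]: "enc_tl (Suc (prod_encode (x, L))) = L"
  by (simp add: enc_tl_def)

lemma enc_tl_0 [simp]: "enc_tl 0 = 0"
  by (simp add: enc_tl_def psnd_def prod_decode_def prod_decode_aux.simps)

lemma enc_drop_list_encode [simp]: "enc_drop i (list_encode xs) = list_encode (drop i xs)"
proof (induction i arbitrary: xs)
  case (Suc i)
  have "enc_tl (list_encode xs) = list_encode (tl xs)"
    by (cases xs) auto
  with Suc show ?case
    by (simp add: enc_drop_def funpow_Suc_right drop_Suc del: funpow.simps)
qed (simp add: enc_drop_def)

lemma enc_nth_list_encode [simp]: "i < length xs \<Longrightarrow> enc_nth (list_encode xs) i = xs ! i"
  by (simp add: enc_nth_def Cons_nth_drop_Suc[symmetric])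

lemma length_le_list_encode: "length xs \<le> list_encode xs"
  by (induction xs) (auto intro: le_trans[OF _ le_prod_encode_2])

lemma enc_length_list_encode [simp]: "enc_length (list_encode xs) = length xs"
proof -
  have "list_encode (drop i xs) \<noteq> 0" if "i < length xs" for i
    using that by (cases "drop i xs") auto
  then show ?thesis
    unfolding enc_length_def using length_le_list_encode[of xs]
    by (intro bounded_min_eqI) auto
qed

lemma recursive_enc_hd: "recursive k A \<Longrightarrow> recursive k (\<lambda>xs. enc_hd (A xs))"
  unfolding enc_hd_def by (intro recursive_pfst recursive_diff recursive_const)

lemma recursive_enc_tl: "recursive k A \<Longrightarrow> recursive k (\<lambda>xs. enc_tl (A xs))"
  unfolding enc_tl_def by (intro recursive_psnd recursive_diff recursive_const)

lemma recursive_enc_Cons: "recursive k A \<Longrightarrow> recursive k B \<Longrightarrow> recursive k (\<lambda>xs. enc_Cons (A xs) (B xs))"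
  unfolding enc_Cons_def by (intro recursive_Suc recursive_prod_encode)

lemma recursive_enc_drop: "recursive k A \<Longrightarrow> recursive k B \<Longrightarrow> recursive k (\<lambda>xs. enc_drop (A xs) (B xs))"
proof -
  have eq: "rec_nat L (\<lambda>i r. enc_tl r) i = enc_drop i L" for i L
    unfolding enc_drop_def by (induction i) auto
  have "recursive 2 (\<lambda>ys. rec_nat (ys ! 1) (\<lambda>i r. enc_tl r) (ys ! 0))"
    by (rule recursive_rec_nat; intro recursive_enc_tl recursive_proj; simp)
  then have "recursive 2 (\<lambda>ys. enc_drop (ys ! 0) (ys ! 1))"
    by (simp only: eq)
  then show "recursive k A \<Longrightarrow> recursive k B \<Longrightarrow> recursive k (\<lambda>xs. enc_drop (A xs) (B xs))"
    by (rule recursive_compose2)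
qed

lemma recursive_enc_nth: "recursive k A \<Longrightarrow> recursive k B \<Longrightarrow> recursive k (\<lambda>xs. enc_nth (A xs) (B xs))"
  unfolding enc_nth_def by (intro recursive_enc_hd recursive_enc_drop)

lemma recursive_enc_length: "recursive k A \<Longrightarrow> recursive k (\<lambda>xs. enc_length (A xs))"
proof -
  have "recursive 1 (\<lambda>ys. enc_length (ys ! 0))"
    unfolding enc_length_def
    by (rule recursive_bounded_min[where P="\<lambda>i xs. enc_drop i (xs ! 0) = 0"];
        intro recursive_Suc recursive_proj decidable_eq recursive_enc_drop recursive_nth_tl recursive_const; simp)
  then show "recursive k A \<Longrightarrow> recursive k (\<lambda>xs. enc_length (A xs))"
    by (rule recursive_compose1)
qed

lemmas recursive_intros =
  recursive_const recursive_proj recursive_nth_tl recursive_nth_tl_tl recursive_Suc recursive_add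
  recursive_diff recursive_mult recursive_power2 recursive_If recursive_bounded_min
  decidable_eq decidable_less decidable_not decidable_conj
  decidable_disj decidable_bex decidable_ball
  recursive_prod_encode recursive_pfst recursive_psnd recursive_enc_hd recursive_enc_tl
  recursive_enc_Cons recursive_enc_nth recursive_enc_length

lemma recursive_mod: "recursive k A \<Longrightarrow> recursive k B \<Longrightarrow> recursive k (\<lambda>xs. A xs mod B xs)"
proof -
  have eq: "rec_nat 0 (\<lambda>i r. if Suc r = m then 0 else Suc r) n = n mod m" for n m :: nat
    by (induction n) (simp_all add: mod_Suc)
  have "recursive 2 (\<lambda>ys. rec_nat 0 (\<lambda>i r. if Suc r = ys ! 1 then 0 else Suc r) (ys ! 0))"
    by (rule recursive_rec_nat; intro recursive_intros; simp)
  then have "recursive 2 (\<lambda>ys. ys ! 0 mod ys ! 1)"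
    by (simp only: eq)
  then show "recursive k A \<Longrightarrow> recursive k B \<Longrightarrow> recursive k (\<lambda>xs. A xs mod B xs)"
    by (rule recursive_compose2)
qed

lemma recursive_div: "recursive k A \<Longrightarrow> recursive k B \<Longrightarrow> recursive k (\<lambda>xs. A xs div B xs)"
proof -
  have eq: "rec_nat 0 (\<lambda>i r. if Suc i mod m = 0 then Suc r else r) n = n div m" for n m :: nat
    by (induction n) (simp_all add: div_Suc)
  have "recursive 2 (\<lambda>ys. rec_nat 0 (\<lambda>i r. if Suc i mod ys ! 1 = 0 then Suc r else r) (ys ! 0))"
    by (rule recursive_rec_nat; intro recursive_intros recursive_mod; simp)
  then have "recursive 2 (\<lambda>ys. ys ! 0 div ys ! 1)"
    by (simp only: eq)
  then show "recursive k A \<Longrightarrow> recursive k B \<Longrightarrow> recursive k (\<lambda>xs. A xs div B xs)"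
    by (rule recursive_compose2)
qed

section \<open>A universal term\<close>

definition claim :: "nat \<Rightarrow> nat \<Rightarrow> nat \<Rightarrow> nat" where
  "claim c xs y = prod_encode (c, prod_encode (xs, y))"

text \<open>An entry \<open>prod_encode (claim c xs y, aux)\<close> asserts that the term with code \<open>c\<close> maps
  the encoded argument list \<open>xs\<close> to \<open>y\<close>. It is justified by the claims satisfying \<open>H\<close> if it
  follows from them by one rule of \<open>eval\<close>; \<open>aux\<close> supplies what the rule leaves open: the
  intermediate values for \<open>Cn\<close>, the previous value for \<open>Pr\<close>, and the predecessors of the
  (nonzero) values below \<open>y\<close> for \<open>Mn\<close>. The tag of \<open>c\<close> is the constructor number used by \<open>code\<close>.\<close>
definition justified :: "nat \<Rightarrow> (nat \<Rightarrow> bool) \<Rightarrow> bool" where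
  "justified e H \<longleftrightarrow>
    (let c = pfst (pfst e); xs = pfst (psnd (pfst e)); y = psnd (psnd (pfst e)); aux = psnd e;
         tag = pfst c; arg = psnd c in
     (tag = 0 \<and> y = 0) \<or>
     (tag = 1 \<and> xs \<noteq> 0 \<and> y = Suc (enc_hd xs)) \<or>
     (tag = 2 \<and> arg < enc_length xs \<and> y = enc_nth xs arg) \<or>
     (tag = 3 \<and> enc_length aux = enc_length (psnd arg) \<and>
        (\<forall>k<enc_length (psnd arg). H (claim (enc_nth (psnd arg) k) xs (enc_nth aux k))) \<and>
        H (claim (pfst arg) aux y)) \<or>
     (tag = 4 \<and> xs \<noteq> 0 \<and> enc_hd xs = 0 \<and> H (claim (pfst arg) (enc_tl xs) y)) \<or>
     (tag = 4 \<and> xs \<noteq> 0 \<and> enc_hd xs \<noteq> 0 \<and> H (claim c (enc_Cons (enc_hd xs - 1) (enc_tl xs)) aux) \<and>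
        H (claim (psnd arg) (enc_Cons (enc_hd xs - 1) (enc_Cons aux (enc_tl xs))) y)) \<or>
     (tag = 5 \<and> H (claim arg (enc_Cons y xs) 0) \<and> enc_length aux = y \<and>
        (\<forall>m<y. H (claim arg (enc_Cons m xs) (Suc (enc_nth aux m))))))"

lemma justified_mono: "justified e H \<Longrightarrow> (\<And>F. H F \<Longrightarrow> H' F) \<Longrightarrow> justified e H'"
  unfolding justified_def Let_def by blast

lemma justified_sound:
  assumes "justified (prod_encode (claim (code f) (list_encode xs) y, aux)) H"
    and IH: "\<And>f xs y. H (claim (code f) (list_encode xs) y) \<Longrightarrow> eval f xs y"
  shows "eval f xs y"
proof -
  note just = assms(1)[unfolded justified_def Let_def claim_def, simplified]
  show ?thesis
  proof (cases f)
    case Z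
    then show ?thesis using just by (auto intro: eval_Z)
  next
    case S
    then show ?thesis using just by (cases xs) (auto intro: eval_S)
  next
    case (Id n)
    then show ?thesis using just by (auto intro: eval_Id)
  next
    case (Cn g gs)
    define ys where "ys = list_decode aux"
    then have aux: "aux = list_encode ys"
      by simp
    from just[unfolded aux] Cn have "length ys = length gs"
      and "\<forall>k<length gs. H (claim (code (gs ! k)) (list_encode xs) (ys ! k))"
      and "H (claim (code g) (list_encode ys) y)"
      by (auto simp: claim_def)
    then show ?thesis
      unfolding Cn by (intro eval_Cn) (auto intro: IH)
  next
    case (Pr g h)
    from just Pr obtain n xs' where xs: "xs = n # xs'"
      by (cases xs) auto
    show ?thesis
    proof (cases n)
      case 0
      from just Pr have "H (claim (code g) (list_encode xs') y)"
        by (auto simp: xs 0 claim_def)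
      then show ?thesis
        unfolding Pr xs 0 by (intro eval_Pr0 IH)
    next
      case (Suc n')
      from just Pr have "H (claim (code (Pr g h)) (list_encode (n' # xs')) aux)"
        and "H (claim (code h) (list_encode (n' # aux # xs')) y)"
        by (auto simp: xs Suc claim_def enc_Cons_def)
      then show ?thesis
        unfolding Pr xs Suc by (intro eval_PrS IH)
    qed
  next
    case (Mn g)
    from just Mn have "H (claim (code g) (list_encode (y # xs)) 0)"
      and "\<forall>m<y. H (claim (code g) (list_encode (m # xs)) (Suc (enc_nth aux m)))"
      by (auto simp: claim_def enc_Cons_def)
    then have "eval g (y # xs) 0" and "\<forall>m<y. \<exists>v. eval g (m # xs) (Suc v)"
      by (blast intro: IH)+
    then show ?thesis
      unfolding Mn by (rule eval_Mn)
  qed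
qed

text \<open>A certificate is a derivation of \<open>eval\<close> flattened into a list in which every entry is
  justified by earlier ones. Validity is decidable, so the universal term can search for
  certificates.\<close>
definition cert_valid :: "nat list \<Rightarrow> bool" where
  "cert_valid cs \<longleftrightarrow> (\<forall>i<length cs. justified (cs ! i) (\<lambda>F. F \<in> pfst ` set (take i cs)))"

lemma cert_sound:
  assumes "cert_valid cs" and "claim (code f) (list_encode xs) y \<in> pfst ` set cs"
  shows "eval f xs y"
proof -
  have "eval f xs y" if "i < length cs" "pfst (cs ! i) = claim (code f) (list_encode xs) y" for i f xs y
    using that
  proof (induction i arbitrary: f xs y rule: less_induct)
    case (less i)
    have "justified (prod_encode (claim (code f) (list_encode xs) y, psnd (cs ! i)))
        (\<lambda>F. F \<in> pfst ` set (take i cs))"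
      using assms(1) less.prems unfolding cert_valid_def by (metis prod_encode_pfst_psnd)
    then show ?case
    proof (rule justified_sound)
      fix g zs z
      assume "claim (code g) (list_encode zs) z \<in> pfst ` set (take i cs)"
      then obtain j where "j < i" "pfst (cs ! j) = claim (code g) (list_encode zs) z"
        using less.prems(1) by (auto simp: in_set_conv_nth)
      with less.IH less.prems(1) show "eval g zs z" by simp
    qed
  qed
  with assms(2) show ?thesis
    by (auto simp: in_set_conv_nth)
qed

definition provable :: "nat \<Rightarrow> bool" where
  "provable F \<longleftrightarrow> (\<exists>cs. cert_valid cs \<and> F \<in> pfst ` set cs)"

lemma cert_valid_append:
  assumes "cert_valid as" "cert_valid bs"
  shows "cert_valid (as @ bs)"
  unfolding cert_valid_def
proof (intro allI impI)
  fix i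
  assume i: "i < length (as @ bs)"
  show "justified ((as @ bs) ! i) (\<lambda>F. F \<in> pfst ` set (take i (as @ bs)))"
  proof (cases "i < length as")
    case True
    then show ?thesis
      using assms(1) unfolding cert_valid_def by (simp add: nth_append)
  next
    case False
    then have "justified (bs ! (i - length as)) (\<lambda>F. F \<in> pfst ` set (take (i - length as) bs))"
      using assms(2) i unfolding cert_valid_def by simp
    then show ?thesis
      using False by (auto simp: nth_append elim!: justified_mono)
  qed
qed

lemma cert_valid_snoc:
  assumes "cert_valid cs" "justified e (\<lambda>F. F \<in> pfst ` set cs)"
  shows "cert_valid (cs @ [e])"
  using assms unfolding cert_valid_def by (auto simp: nth_append less_Suc_eq)

lemma cert_valid_Nil: "cert_valid []"
  by (simp add: cert_valid_def)

lemma cert_valid_covering: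
  "finite A \<Longrightarrow> \<forall>F\<in>A. provable F \<Longrightarrow> \<exists>cs. cert_valid cs \<and> A \<subseteq> pfst ` set cs"
proof (induction A rule: finite_induct)
  case empty
  then show ?case using cert_valid_Nil by blast
next
  case (insert F A)
  then obtain cs cs' where "cert_valid cs" "A \<subseteq> pfst ` set cs" "cert_valid cs'" "F \<in> pfst ` set cs'"
    unfolding provable_def by auto
  then show ?case
    by (intro exI[of _ "cs @ cs'"]) (auto intro: cert_valid_append)
qed

lemma provable_step:
  assumes "finite A" "\<forall>G\<in>A. provable G" "justified (prod_encode (F, aux)) (\<lambda>G. G \<in> A)"
  shows "provable F"
proof -
  obtain cs where cs: "cert_valid cs" "A \<subseteq> pfst ` set cs"
    using cert_valid_covering assms(1,2) by blast
  have "justified (prod_encode (F, aux)) (\<lambda>G. G \<in> pfst ` set cs)"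
    using assms(3) by (rule justified_mono) (use cs(2) in blast)
  with cs(1) have "cert_valid (cs @ [prod_encode (F, aux)])"
    by (rule cert_valid_snoc)
  then show ?thesis
    unfolding provable_def by force
qed

lemma eval_imp_provable: "eval f xs y \<Longrightarrow> provable (claim (code f) (list_encode xs) y)"
proof (induction rule: eval.induct)
  case (eval_Cn ys gs xs f y)
  let ?S = "insert (claim (code f) (list_encode ys) y)
              ((\<lambda>k. claim (code (gs ! k)) (list_encode xs) (ys ! k)) ` {..<length gs})"
  show ?case
    by (rule provable_step[of ?S _ "list_encode ys"])
       (use eval_Cn in \<open>auto simp: justified_def claim_def\<close>)
next
  case (eval_Pr0 f xs y g)
  then show ?case
    by (intro provable_step[of "{claim (code f) (list_encode xs) y}" _ 0])
       (auto simp: justified_def claim_def)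
next
  case (eval_PrS f g n xs y z)
  then show ?case
    by (intro provable_step[of "{claim (code (Pr f g)) (list_encode (n # xs)) y,
                                 claim (code g) (list_encode (n # y # xs)) z}" _ y])
       (auto simp: justified_def claim_def enc_Cons_def)
next
  case (eval_Mn f n xs)
  then obtain v where v: "\<forall>m<n. provable (claim (code f) (list_encode (m # xs)) (Suc (v m)))"
    by metis
  let ?S = "insert (claim (code f) (list_encode (n # xs)) 0)
              ((\<lambda>m. claim (code f) (list_encode (m # xs)) (Suc (v m))) ` {..<n})"
  show ?case
    by (rule provable_step[of ?S _ "list_encode (map v [0..<n])"])
       (use eval_Mn v in \<open>auto simp: justified_def claim_def enc_Cons_def\<close>)
qed (auto intro!: provable_step[of "{}"] simp: justified_def claim_def)

lemma mem_pfst_set_take_iff: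
  assumes "i \<le> length cs"
  shows "F \<in> pfst ` set (take i cs) \<longleftrightarrow> (\<exists>j<i. pfst (cs ! j) = F)"
  using assms by (auto simp flip: nth_image)

lemma cert_valid_list_decode:
  "cert_valid (list_decode C) \<longleftrightarrow>
    (\<forall>i<enc_length C. justified (enc_nth C i) (\<lambda>F. \<exists>j<i. pfst (enc_nth C j) = F))"
proof -
  define cs where "cs = list_decode C"
  then have C: "C = list_encode cs"
    by simp
  have "F \<in> pfst ` set (take i cs) \<longleftrightarrow> (\<exists>j<i. pfst (enc_nth C j) = F)" if "i < length cs" for i F
    using that mem_pfst_set_take_iff[of i cs F] by (auto simp: C)
  then show ?thesis
    unfolding cert_valid_def cs_def[symmetric] C by simp
qed

lemma mem_pfst_list_decode: "F \<in> pfst ` set (list_decode C) \<longleftrightarrow> (\<exists>j<enc_length C. pfst (enc_nth C j) = F)"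
proof -
  define cs where "cs = list_decode C"
  then have "C = list_encode cs"
    by simp
  then show ?thesis
    using mem_pfst_set_take_iff[of "length cs" cs F] unfolding cs_def[symmetric] by auto
qed

lemma decidable_claimed_before:
  assumes "recursive k C" "recursive k I" "recursive k F"
  shows "decidable k (\<lambda>xs. \<exists>j<I xs. pfst (enc_nth (C xs) j) = F xs)"
  by (rule decidable_bex[OF assms(2)])
     (intro decidable_eq recursive_pfst recursive_enc_nth recursive_tl[OF assms(1)] recursive_tl[OF assms(3)]
       recursive_proj; simp)

lemma decidable_justified:
  "decidable 2 (\<lambda>ys. justified (enc_nth (ys ! 0) (ys ! 1)) (\<lambda>F. \<exists>j<ys ! 1. pfst (enc_nth (ys ! 0) j) = F))"
  unfolding justified_def Let_def claim_def
  by (intro recursive_intros decidable_claimed_before; simp)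

definition certifies :: "nat \<Rightarrow> nat \<Rightarrow> nat \<Rightarrow> bool" where
  "certifies w c x \<longleftrightarrow> cert_valid (list_decode (pfst w))
     \<and> claim c (enc_Cons x 0) (psnd w) \<in> pfst ` set (list_decode (pfst w))"

lemma decidable_justified_entry:
  assumes "recursive k A" "recursive k B"
  shows "decidable k (\<lambda>xs. justified (enc_nth (A xs) (B xs)) (\<lambda>F. \<exists>j<B xs. pfst (enc_nth (A xs) j) = F))"
  using recursive_compose2[OF decidable_justified[unfolded decidable_def] assms]
  unfolding decidable_def by simp

lemma decidable_certifies: "decidable 3 (\<lambda>ys. certifies (ys ! 0) (tl ys ! 0) (tl ys ! 1))"
  unfolding certifies_def cert_valid_list_decode mem_pfst_list_decode claim_def
  by (intro recursive_intros decidable_justified_entry; simp)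

definition Univ :: recf where
  "Univ = Cn (recf_of 1 (\<lambda>ys. psnd (ys ! 0))) [minimize 2 (\<lambda>w xs. certifies w (xs ! 0) (xs ! 1))]"

lemma eval_Univ:
  assumes "eval f [x] y"
  shows "eval Univ [code f, x] y"
proof -
  obtain cs where "cert_valid cs" "claim (code f) (list_encode [x]) y \<in> pfst ` set cs"
    using eval_imp_provable[OF assms] unfolding provable_def by blast
  then have "certifies (prod_encode (list_encode cs, y)) (code f) x"
    unfolding certifies_def by (simp add: enc_Cons_def)
  then have "\<exists>w. certifies w (code f) x" ..
  define w where "w = (LEAST w. certifies w (code f) x)"
  have w: "certifies w (code f) x"
    unfolding w_def by (rule LeastI_ex) fact
  have "\<forall>m<w. \<not> certifies m (code f) x"
    unfolding w_def using not_less_Least by blast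
  with w have "eval (minimize 2 (\<lambda>w xs. certifies w (xs ! 0) (xs ! 1))) [code f, x] w"
    using eval_minimize[where k=2 and P="\<lambda>w xs. certifies w (xs ! 0) (xs ! 1)" and xs="[code f, x]"]
      decidable_certifies
    by simp
  moreover have "recursive 1 (\<lambda>ys. psnd (ys ! 0))"
    by (intro recursive_psnd recursive_proj) simp
  then have "eval (recf_of 1 (\<lambda>ys. psnd (ys ! 0))) [w] (psnd w)"
    using eval_recf_of[of 1 _ "[w]"] by fastforce
  moreover have "eval f [x] (psnd w)"
    using w unfolding certifies_def
    by (intro cert_sound[where cs="list_decode (pfst w)"]) (simp_all add: enc_Cons_def)
  then have "psnd w = y"
    using eval_deterministic assms by blast
  ultimately show ?thesis
    unfolding Univ_def by (intro eval_Cn[where ys="[w]"]) auto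
qed

section \<open>Columns and segments\<close>

definition column :: "nat \<Rightarrow> nat set" where
  "column p = {x. pfst x = p}"

definition segment :: "nat \<Rightarrow> nat \<Rightarrow> nat set" where
  "segment p k = {x. pfst x = p \<and> psnd x \<le> k}"

lemma canon_eq_set_encode: "canon = set_encode"
  unfolding canon_def set_encode_def by simp

lemma mem_column_iff: "x \<in> column p \<longleftrightarrow> (\<exists>j. x = prod_encode (p, j))"
proof
  assume "x \<in> column p"
  then have "x = prod_encode (p, psnd x)"
    unfolding column_def using prod_encode_pfst_psnd[of x] by simp
  then show "\<exists>j. x = prod_encode (p, j)" ..
qed (auto simp: column_def)

lemma segment_eq_image: "segment p k = (\<lambda>j. prod_encode (p, j)) ` {..k}"
proof (intro set_eqI iffI)
  fix x
  assume "x \<in> segment p k"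
  then have "x = prod_encode (p, psnd x)" "psnd x \<in> {..k}"
    unfolding segment_def using prod_encode_pfst_psnd[of x] by simp_all
  then show "x \<in> (\<lambda>j. prod_encode (p, j)) ` {..k}" ..
qed (auto simp: segment_def)

lemma segment_0: "segment p 0 = {prod_encode (p, 0)}"
  unfolding segment_eq_image by simp

lemma segment_Suc: "segment p (Suc k) = insert (prod_encode (p, Suc k)) (segment p k)"
  unfolding segment_eq_image by (simp add: atMost_Suc)

lemma finite_segment: "finite (segment p k)"
  unfolding segment_eq_image by simp

lemma segment_subset_column: "segment p k \<subseteq> column p"
  unfolding segment_def column_def by blast

lemma segment_nonempty: "segment p k \<noteq> {}"
  unfolding segment_eq_image by simp

lemma canon_singleton: "canon {x} = 2 ^ x"
  by (simp add: canon_def)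

lemma canon_segment_Suc: "canon (segment p (Suc k)) = canon (segment p k) + 2 ^ prod_encode (p, Suc k)"
  unfolding canon_eq_set_encode segment_Suc
  by (subst set_encode_insert) (auto simp: finite_segment segment_eq_image)

lemma recursive_canon_segment:
  "recursive k A \<Longrightarrow> recursive k B \<Longrightarrow> recursive k (\<lambda>xs. canon (segment (A xs) (B xs)))"
proof -
  have eq: "rec_nat (2 ^ prod_encode (p, 0)) (\<lambda>i r. r + 2 ^ prod_encode (p, Suc i)) k = canon (segment p k)"
    for p k
    by (induction k) (simp_all add: segment_0 canon_segment_Suc canon_singleton)
  have "recursive 2 (\<lambda>ys. rec_nat (2 ^ prod_encode (ys ! 0, 0)) (\<lambda>i r. r + 2 ^ prod_encode (ys ! 0, Suc i)) (ys ! 1))"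
    by (rule recursive_rec_nat; intro recursive_intros; simp)
  then have "recursive 2 (\<lambda>ys. canon (segment (ys ! 0) (ys ! 1)))"
    by (simp only: eq)
  then show "recursive k A \<Longrightarrow> recursive k B \<Longrightarrow> recursive k (\<lambda>xs. canon (segment (A xs) (B xs)))"
    by (rule recursive_compose2)
qed

lemma less_canon_segment: "k < canon (segment p k)"
proof -
  have "k \<le> prod_encode (p, k)"
    by (rule le_prod_encode_2)
  also have "\<dots> < 2 ^ prod_encode (p, k)"
    by (rule less_exp)
  also have "\<dots> \<le> canon (segment p k)"
    unfolding canon_def using finite_segment by (intro member_le_sum) (auto simp: segment_def)
  finally show ?thesis .
qed

lemma canon_segment_less_Suc: "canon (segment p k) < canon (segment p (Suc k))"
  unfolding canon_segment_Suc by simp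

section \<open>The self-referential learner\<close>

definition Guess :: recf where
  "Guess = minimize 3 (\<lambda>y ys. pfst (ys ! 2) = ys ! 0 \<and> (ys ! 1 = 0 \<or> psnd (ys ! 2) < ys ! 1))"

definition guess :: "nat \<Rightarrow> nat \<Rightarrow> nat" where
  "guess p j = code (Cn Guess [const_recf p, const_recf j, Id 0])"

lemma W_guess: "W (guess p j) = {x. pfst x = p \<and> (j = 0 \<or> psnd x < j)}"
proof -
  have "decidable 4 (\<lambda>ys. pfst (tl ys ! 2) = tl ys ! 0 \<and> (tl ys ! 1 = 0 \<or> psnd (tl ys ! 2) < tl ys ! 1))"
    by (intro recursive_intros; simp)
  then have "eval Guess [p, j, x] y \<longleftrightarrow> y = 0 \<and> pfst x = p \<and> (j = 0 \<or> psnd x < j)" for x y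
    unfolding Guess_def
    using eval_minimize[where k=3 and P="\<lambda>y ys. pfst (ys ! 2) = ys ! 0 \<and> (ys ! 1 = 0 \<or> psnd (ys ! 2) < ys ! 1)"
        and xs="[p, j, x]" and y=y]
    by auto
  moreover have "eval (Cn Guess [const_recf p, const_recf j, Id 0]) [x] y \<longleftrightarrow> eval Guess [p, j, x] y" for x y
    by (rule eval_Cn_iff) (auto simp: less_Suc_eq numeral_3_eq_3 intro: eval_const_recf eval_Id[of 0 "[x]", simplified])
  ultimately show ?thesis
    unfolding guess_def W_code by auto
qed

lemma W_guess_0: "W (guess p 0) = column p"
  unfolding W_guess column_def by simp

lemma W_guess_Suc: "W (guess p (Suc k)) = segment p k"
  unfolding W_guess segment_def by auto

lemma recursive_code_const_recf: "recursive k A \<Longrightarrow> recursive k (\<lambda>xs. code (const_recf (A xs)))"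
proof -
  have eq: "rec_nat 0 (\<lambda>i r. prod_encode (3, prod_encode (code S, enc_Cons r 0))) n = code (const_recf n)" for n
    by (induction n) (simp_all add: enc_Cons_def prod_encode_0_0)
  have "recursive 1 (\<lambda>ys. rec_nat 0 (\<lambda>i r. prod_encode (3, prod_encode (code S, enc_Cons r 0))) (ys ! 0))"
    by (rule recursive_rec_nat; intro recursive_intros; simp)
  then have "recursive 1 (\<lambda>ys. code (const_recf (ys ! 0)))"
    by (simp only: eq)
  then show "recursive k A \<Longrightarrow> recursive k (\<lambda>xs. code (const_recf (A xs)))"
    by (rule recursive_compose1)
qed

lemma recursive_guess: "recursive k A \<Longrightarrow> recursive k B \<Longrightarrow> recursive k (\<lambda>xs. guess (A xs) (B xs))"
proof -
  have "guess p j = prod_encode (3, prod_encode (code Guess,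
      enc_Cons (code (const_recf p)) (enc_Cons (code (const_recf j)) (enc_Cons (code (Id 0)) 0))))" for p j
    by (simp add: guess_def enc_Cons_def)
  then show "recursive k A \<Longrightarrow> recursive k B \<Longrightarrow> recursive k (\<lambda>xs. guess (A xs) (B xs))"
    by (simp only:) (intro recursive_intros recursive_code_const_recf)
qed

definition lowest_bit :: "nat \<Rightarrow> nat" where
  "lowest_bit n = bounded_min n (\<lambda>i. n div 2 ^ i mod 2 = 1)"

lemma recursive_lowest_bit: "recursive k A \<Longrightarrow> recursive k (\<lambda>xs. lowest_bit (A xs))"
proof -
  have "recursive 1 (\<lambda>ys. lowest_bit (ys ! 0))"
    unfolding lowest_bit_def
    by (rule recursive_bounded_min[where P="\<lambda>i xs. xs ! 0 div 2 ^ i mod 2 = 1"];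
        intro recursive_intros recursive_div recursive_mod; simp)
  then show "recursive k A \<Longrightarrow> recursive k (\<lambda>xs. lowest_bit (A xs))"
    by (rule recursive_compose1)
qed

lemma lowest_bit_canon:
  assumes "finite D" "D \<noteq> {}"
  shows "lowest_bit (canon D) = Min D"
  unfolding lowest_bit_def canon_eq_set_encode
proof (rule bounded_min_eqI)
  have mem: "x \<in> D \<longleftrightarrow> odd (set_encode D div 2 ^ x)" for x
    using set_encode_inverse[OF assms(1)] unfolding set_decode_def by blast
  show "set_encode D div 2 ^ Min D mod 2 = 1"
    using mem[of "Min D"] Min_in[OF assms] by (simp add: odd_iff_mod_2_eq_one)
  have "2 ^ Min D \<le> set_encode D"
    unfolding set_encode_def using assms Min_in[OF assms] by (intro member_le_sum) auto
  then show "Min D < set_encode D"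
    using less_exp[of "Min D"] by linarith
  show "\<forall>i<Min D. \<not> set_encode D div 2 ^ i mod 2 = 1"
    using mem assms by (auto simp: odd_iff_mod_2_eq_one[symmetric])
qed

definition column_of :: "nat \<Rightarrow> nat" where
  "column_of n = pfst (lowest_bit n)"

definition Learner :: recf where
  "Learner = Cn Univ [recf_of 1 (\<lambda>ys. column_of (ys ! 0)),
                      recf_of 1 (\<lambda>ys. prod_encode (column_of (ys ! 0), ys ! 0))]"

definition learner :: "nat \<Rightarrow> nat option" where
  "learner = phi (code Learner)"

lemma partial_computable_learner: "partial_computable learner"
  unfolding learner_def by (rule partial_computable_phi_code)

lemma learner_Univ:
  assumes "eval Univ [column_of n, prod_encode (column_of n, n)] y"
  shows "learner n = Some y"
proof -
  have "recursive 1 (\<lambda>ys. column_of (ys ! 0))" "recursive 1 (\<lambda>ys. prod_encode (column_of (ys ! 0), ys ! 0))"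
    unfolding column_of_def by (intro recursive_intros recursive_lowest_bit; simp)+
  then have "eval Learner [n] y"
    unfolding Learner_def using assms eval_recf_of[of 1 _ "[n]"]
    by (subst eval_Cn_iff[where vs="[column_of n, prod_encode (column_of n, n)]"]) (fastforce simp: less_Suc_eq)+
  then show ?thesis
    unfolding learner_def phi_code_eq_Some .
qed

lemma learner_empty: "learner (canon {}) = Some 0"
proof -
  have "column_of 0 = code Z"
    by (simp add: column_of_def lowest_bit_def bounded_min_def pfst_def prod_decode_def
        prod_decode_aux.simps prod_encode_0_0)
  moreover have "eval Univ [code Z, prod_encode (code Z, 0)] 0"
    by (intro eval_Univ eval_Z)
  ultimately show ?thesis
    by (intro learner_Univ) (simp add: canon_def)
qed

lemma learner_self_reference:
  assumes "recursive 2 (\<lambda>ys. F (ys ! 0) (ys ! 1))"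
  shows "\<exists>p. \<forall>D. finite D \<longrightarrow> D \<noteq> {} \<longrightarrow> D \<subseteq> column p \<longrightarrow> learner (canon D) = Some (F p (canon D))"
proof -
  let ?f = "recf_of 1 (\<lambda>ys. F (pfst (ys ! 0)) (psnd (ys ! 0)))"
  have "recursive 1 (\<lambda>ys. F (pfst (ys ! 0)) (psnd (ys ! 0)))"
    by (intro recursive_compose2[OF assms] recursive_pfst recursive_psnd recursive_proj) simp_all
  then have f: "eval ?f [prod_encode (p, n)] (F p n)" for p n
    using eval_recf_of[of 1 _ "[prod_encode (p, n)]"] by fastforce
  have "learner (canon D) = Some (F (code ?f) (canon D))"
    if "finite D" "D \<noteq> {}" "D \<subseteq> column (code ?f)" for D
  proof (rule learner_Univ)
    have "column_of (canon D) = code ?f"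
      using that Min_in[OF that(1,2)] unfolding column_of_def column_def lowest_bit_canon[OF that(1,2)] by blast
    then show "eval Univ [column_of (canon D), prod_encode (column_of (canon D), canon D)] (F (code ?f) (canon D))"
      using eval_Univ[OF f] by simp
  qed
  then show ?thesis
    by blast
qed

lemma finite_content_prefix: "finite (content_prefix T n)"
proof -
  have "content_prefix T n \<subseteq> (\<lambda>m. the (T m)) ` {..<n}"
    unfolding content_prefix_def by (auto intro: rev_image_eqI)
  then show ?thesis
    by (rule finite_subset) simp
qed

lemma content_prefix_subset: "content_prefix T n \<subseteq> content T"
  unfolding content_prefix_def content_def by auto

lemma content_prefix_eventually_superset:
  assumes "finite D" "D \<subseteq> content T"
  shows "\<exists>N. \<forall>n\<ge>N. D \<subseteq> content_prefix T n"
proof -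
  have "\<forall>x\<in>D. \<exists>n. T n = Some x"
    using assms(2) unfolding content_def by blast
  then obtain pos where pos: "\<forall>x\<in>D. T (pos x) = Some x"
    by (rule bchoice[THEN exE])
  have "D \<subseteq> content_prefix T n" if "n \<ge> Suc (Max (pos ` D))" for n
  proof
    fix x
    assume "x \<in> D"
    then have "pos x \<le> Max (pos ` D)"
      using assms(1) by simp
    with that pos \<open>x \<in> D\<close> show "x \<in> content_prefix T n"
      unfolding content_prefix_def by (auto intro!: exI[of _ "pos x"])
  qed
  then show ?thesis
    by blast
qed

lemma text_exists: "\<exists>T. content T = L"
proof
  show "content (\<lambda>k. if k \<in> L then Some k else None) = L"
    unfolding content_def by auto
qed

lemma TxtSdEx_learns_if_locked:
  assumes defined: "\<forall>D. D \<subseteq> L \<longrightarrow> finite D \<longrightarrow> h (canon D) \<noteq> None"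
    and locked: "finite K" "K \<subseteq> L" "\<forall>D. K \<subseteq> D \<longrightarrow> D \<subseteq> L \<longrightarrow> finite D \<longrightarrow> h (canon D) = Some e"
    and "W e = L"
  shows "TxtSdEx_learns h L"
  unfolding TxtSdEx_learns_def
proof (intro allI impI)
  fix T
  assume T: "content T = L"
  then have prefix: "content_prefix T n \<subseteq> L" "finite (content_prefix T n)" for n
    using content_prefix_subset finite_content_prefix by auto
  then have total: "\<forall>i. Sd h T i \<noteq> None"
    unfolding Sd_def using defined by simp
  obtain N where "\<forall>n\<ge>N. K \<subseteq> content_prefix T n"
    using content_prefix_eventually_superset[of K T] locked(1,2) T by auto
  then have "\<forall>n\<ge>N. Sd h T n = Some e"
    unfolding Sd_def using locked(3) prefix by simp
  then have "Ex_conv (\<lambda>i. the (Sd h T i)) T"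
    unfolding Ex_conv_def using \<open>W e = L\<close> T by (intro exI[of _ N]) simp
  with total show "(\<forall>i. Sd h T i \<noteq> None) \<and> Ex_conv (\<lambda>i. the (Sd h T i)) T" ..
qed

lemma TxtSdEx_learns_on_text:
  assumes "TxtSdEx_learns h L" "content T = L"
  obtains n0 where "\<forall>i. Sd h T i \<noteq> None" "\<forall>n\<ge>n0. the (Sd h T n) = the (Sd h T n0)"
    "W (the (Sd h T n0)) = L"
proof -
  have total: "\<forall>i. Sd h T i \<noteq> None" and conv: "Ex_conv (\<lambda>i. the (Sd h T i)) T"
    using assms(1)[unfolded TxtSdEx_learns_def, rule_format, OF assms(2)] by simp_all
  from conv obtain n0 where n0: "\<forall>n\<ge>n0. the (Sd h T n) = the (Sd h T n0) \<and> W (the (Sd h T n0)) = content T"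
    unfolding Ex_conv_def by blast
  show ?thesis
  proof (rule that)
    show "\<forall>i. Sd h T i \<noteq> None"
      by (rule total)
    show "\<forall>n\<ge>n0. the (Sd h T n) = the (Sd h T n0)" "W (the (Sd h T n0)) = L"
      using n0 assms(2) by blast+
  qed
qed

lemma TxtSdEx_learns_imp_converges:
  assumes "TxtSdEx_learns h L" "content T = L"
  shows "\<exists>n0. \<forall>n\<ge>n0. Sd h T n = Sd h T n0"
proof -
  obtain n0 where total: "\<forall>i. Sd h T i \<noteq> None" and n0: "\<forall>n\<ge>n0. the (Sd h T n) = the (Sd h T n0)"
    using TxtSdEx_learns_on_text[OF assms] .
  have "Sd h T n = Sd h T n0" if "n \<ge> n0" for n
    using total n0 that by (metis option.collapse)
  then show ?thesis
    by blast
qed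

lemma TxtSdEx_learns_finite_index:
  assumes "TxtSdEx_learns h L" "finite L"
  shows "W (the (h (canon L))) = L"
proof -
  obtain T where T: "content T = L"
    using text_exists by blast
  obtain n0 where n0: "\<forall>n\<ge>n0. the (Sd h T n) = the (Sd h T n0)" "W (the (Sd h T n0)) = L"
    by (rule TxtSdEx_learns_on_text[OF assms(1) T])
  obtain N where N: "\<forall>n\<ge>N. L \<subseteq> content_prefix T n"
    using content_prefix_eventually_superset[of L T] assms(2) T by auto
  have "content_prefix T (max n0 N) = L"
    using N[rule_format, of "max n0 N"] content_prefix_subset[of T "max n0 N"] T by auto
  then have "the (h (canon L)) = the (Sd h T (max n0 N))"
    unfolding Sd_def by simp
  also have "\<dots> = the (Sd h T n0)"
    using n0(1) max.cobounded1 by blast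
  finally show ?thesis
    using n0(2) by simp
qed

section \<open>Diagonalization against total learners\<close>

definition column_text :: "nat \<Rightarrow> lang_text" where
  "column_text p k = Some (prod_encode (p, k))"

lemma content_column_text: "content (column_text p) = column p"
  unfolding content_def column_text_def mem_column_iff set_eq_iff by auto

lemma content_prefix_column_text: "content_prefix (column_text p) (Suc k) = segment p k"
  unfolding content_prefix_def column_text_def segment_eq_image by (auto simp: less_Suc_eq_le)

lemma TxtSdEx_learns_column_imp_repeat:
  assumes "TxtSdEx_learns h (column p)"
  shows "\<exists>t. h (canon (segment p t)) = h (canon (segment p (Suc t)))"
proof -
  obtain n0 where n0: "\<forall>n\<ge>n0. Sd h (column_text p) n = Sd h (column_text p) n0"
    using TxtSdEx_learns_imp_converges[OF assms content_column_text] by blast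
  have "Sd h (column_text p) (Suc n0) = Sd h (column_text p) (Suc (Suc n0))"
    using n0[rule_format, of "Suc n0"] n0[rule_format, of "Suc (Suc n0)"] by simp
  then show ?thesis
    unfolding Sd_def content_prefix_column_text by blast
qed

definition repeats :: "(nat \<Rightarrow> nat) \<Rightarrow> nat \<Rightarrow> nat \<Rightarrow> bool" where
  "repeats G p t \<longleftrightarrow> G (canon (segment p t)) = G (canon (segment p (Suc t)))"

text \<open>The search for the first repetition of \<open>G\<close> may be bounded by \<open>n\<close> because
  \<open>t < canon (segment p t)\<close>.\<close>
definition diag_guess :: "(nat \<Rightarrow> nat) \<Rightarrow> nat \<Rightarrow> nat \<Rightarrow> nat" where
  "diag_guess G p n =
    (let t = bounded_min n (repeats G p) in
     if n = canon (segment p t) then guess p (Suc t)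
     else if n = canon (segment p (Suc t)) then guess p (Suc (Suc t))
     else guess p 0)"

lemma recursive_diag_guess:
  assumes "recursive 1 (\<lambda>ys. G (ys ! 0))"
  shows "recursive 2 (\<lambda>ys. diag_guess G (ys ! 0) (ys ! 1))"
proof -
  have G: "recursive k A \<Longrightarrow> recursive k (\<lambda>xs. G (A xs))" for k A
    by (rule recursive_compose1[OF assms])
  show ?thesis
    unfolding diag_guess_def Let_def repeats_def
    by (intro recursive_intros recursive_guess recursive_canon_segment G; simp)
qed

lemma diag_guess_first_repeat:
  assumes "repeats G p t" "\<forall>s<t. \<not> repeats G p s"
  shows "diag_guess G p (canon (segment p t)) = guess p (Suc t)"
    and "diag_guess G p (canon (segment p (Suc t))) = guess p (Suc (Suc t))"
proof -
  have "bounded_min n (repeats G p) = t" if "t < n" for n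
    using assms that by (intro bounded_min_eqI)
  moreover have "t < canon (segment p t)" "t < canon (segment p (Suc t))"
    using less_canon_segment[of t p] canon_segment_less_Suc[of p t] by linarith+
  ultimately show "diag_guess G p (canon (segment p t)) = guess p (Suc t)"
    and "diag_guess G p (canon (segment p (Suc t))) = guess p (Suc (Suc t))"
    unfolding diag_guess_def using canon_segment_less_Suc[of p t] by auto
qed

lemma diag_guess_no_repeat:
  assumes "\<forall>t. \<not> repeats G p t"
  shows "diag_guess G p n = guess p 0"
proof -
  have "bounded_min n (repeats G p) = n"
    using assms by (intro bounded_min_none) blast
  moreover have "n \<noteq> canon (segment p n)" "n \<noteq> canon (segment p (Suc n))"
    using less_canon_segment[of n p] less_canon_segment[of "Suc n" p] by auto
  ultimately show ?thesis
    unfolding diag_guess_def by simp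
qed

lemma learner_learns_if_locked:
  assumes p: "\<forall>D. finite D \<longrightarrow> D \<noteq> {} \<longrightarrow> D \<subseteq> column p \<longrightarrow> learner (canon D) = Some (F (canon D))"
    and L: "L \<subseteq> column p"
    and K: "finite K" "K \<noteq> {}" "K \<subseteq> L"
    and locked: "\<forall>D. K \<subseteq> D \<longrightarrow> D \<subseteq> L \<longrightarrow> finite D \<longrightarrow> F (canon D) = e"
    and "W e = L"
  shows "TxtSdEx_learns learner L"
proof (rule TxtSdEx_learns_if_locked[where K=K and e=e])
  show "\<forall>D. D \<subseteq> L \<longrightarrow> finite D \<longrightarrow> learner (canon D) \<noteq> None"
  proof (intro allI impI)
    fix D
    assume "D \<subseteq> L" "finite D"
    with p L learner_empty show "learner (canon D) \<noteq> None"
      by (cases "D = {}") auto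
  qed
  show "\<forall>D. K \<subseteq> D \<longrightarrow> D \<subseteq> L \<longrightarrow> finite D \<longrightarrow> learner (canon D) = Some e"
  proof (intro allI impI)
    fix D
    assume D: "K \<subseteq> D" "D \<subseteq> L" "finite D"
    with K(2) have "D \<noteq> {}"
      by blast
    with D p L locked show "learner (canon D) = Some e"
      by auto
  qed
qed (use K \<open>W e = L\<close> in auto)

lemma learner_learns_segment:
  assumes p: "\<forall>D. finite D \<longrightarrow> D \<noteq> {} \<longrightarrow> D \<subseteq> column p \<longrightarrow> learner (canon D) = Some (F (canon D))"
    and F: "F (canon (segment p k)) = guess p (Suc k)"
  shows "TxtSdEx_learns learner (segment p k)"
proof (rule learner_learns_if_locked[OF p segment_subset_column finite_segment segment_nonempty order_refl])
  show "\<forall>D. segment p k \<subseteq> D \<longrightarrow> D \<subseteq> segment p k \<longrightarrow> finite D \<longrightarrow> F (canon D) = guess p (Suc k)"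
    using F by (auto dest: subset_antisym)
qed (rule W_guess_Suc)

lemma learner_learns_column:
  assumes p: "\<forall>D. finite D \<longrightarrow> D \<noteq> {} \<longrightarrow> D \<subseteq> column p \<longrightarrow> learner (canon D) = Some (F (canon D))"
    and F: "\<forall>n. F n = guess p 0"
  shows "TxtSdEx_learns learner (column p)"
proof (rule learner_learns_if_locked[OF p order_refl, of "{prod_encode (p, 0)}"])
  show "\<forall>D. {prod_encode (p, 0)} \<subseteq> D \<longrightarrow> D \<subseteq> column p \<longrightarrow> finite D \<longrightarrow> F (canon D) = guess p 0"
    using F by blast
qed (simp_all add: W_guess_0 column_def)

lemma recursive_the_total_computable:
  assumes "total_computable g"
  shows "recursive 1 (\<lambda>ys. the (g (ys ! 0)))"
proof -
  obtain f where f: "\<forall>x y. g x = Some y \<longleftrightarrow> eval f [x] y" and total: "\<forall>x. g x \<noteq> None"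
    using assms unfolding total_computable_def partial_computable_def by blast
  have "eval f xs (the (g (xs ! 0)))" if "length xs = 1" for xs
  proof -
    from that obtain x where "xs = [x]"
      by (auto simp: length_Suc_conv)
    moreover have "g x = Some (the (g x))"
      using total by simp
    ultimately show ?thesis
      using f by simp
  qed
  then show ?thesis
    unfolding recursive_def by blast
qed

lemma TxtSdEx_learns_segments_distinct:
  assumes "TxtSdEx_learns h (segment p t)" "TxtSdEx_learns h (segment p (Suc t))"
  shows "the (h (canon (segment p t))) \<noteq> the (h (canon (segment p (Suc t))))"
proof
  assume eq: "the (h (canon (segment p t))) = the (h (canon (segment p (Suc t))))"
  have "segment p t = W (the (h (canon (segment p t))))"
    using TxtSdEx_learns_finite_index[OF assms(1) finite_segment] by simp
  also have "\<dots> = segment p (Suc t)"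
    unfolding eq by (rule TxtSdEx_learns_finite_index[OF assms(2) finite_segment])
  finally show False
    using canon_segment_less_Suc[of p t] by simp
qed

lemma learner_beats_total_learner:
  assumes "total_computable g"
  shows "\<exists>L. TxtSdEx_learns learner L \<and> \<not> TxtSdEx_learns g L"
proof -
  define G where "G x = the (g x)" for x
  have "recursive 1 (\<lambda>ys. G (ys ! 0))"
    unfolding G_def using assms by (rule recursive_the_total_computable)
  then obtain p where p: "\<forall>D. finite D \<longrightarrow> D \<noteq> {} \<longrightarrow> D \<subseteq> column p \<longrightarrow>
      learner (canon D) = Some (diag_guess G p (canon D))"
    using learner_self_reference[OF recursive_diag_guess] by blast
  show ?thesis
  proof (cases "\<exists>t. repeats G p t")
    case True
    define t where "t = (LEAST t. repeats G p t)"
    have t: "repeats G p t" "\<forall>s<t. \<not> repeats G p s"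
      unfolding t_def using True not_less_Least by (blast intro: LeastI_ex)+
    have "TxtSdEx_learns learner (segment p t)" "TxtSdEx_learns learner (segment p (Suc t))"
      by (intro learner_learns_segment[OF p] diag_guess_first_repeat[OF t])+
    moreover have "\<not> (TxtSdEx_learns g (segment p t) \<and> TxtSdEx_learns g (segment p (Suc t)))"
      using TxtSdEx_learns_segments_distinct t(1) unfolding repeats_def G_def by blast
    ultimately show ?thesis
      by blast
  next
    case False
    then have "TxtSdEx_learns learner (column p)"
      by (intro learner_learns_column[OF p] allI diag_guess_no_repeat) simp
    moreover have "\<not> TxtSdEx_learns g (column p)"
    proof
      assume "TxtSdEx_learns g (column p)"
      then obtain t where "g (canon (segment p t)) = g (canon (segment p (Suc t)))"
        using TxtSdEx_learns_column_imp_repeat by blast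
      then have "repeats G p t"
        unfolding repeats_def G_def by simp
      with False show False
        by blast
    qed
    ultimately show ?thesis
      by blast
  qed
qed

theorem theorem9:
  shows "\<exists>\<L>. TxtSdEx \<L> \<and> \<not> R_TxtSdEx \<L>"
proof (intro exI conjI)
  let ?\<L> = "{L. TxtSdEx_learns learner L}"
  show "TxtSdEx ?\<L>"
    unfolding TxtSdEx_def using partial_computable_learner by blast
  show "\<not> R_TxtSdEx ?\<L>"
    unfolding R_TxtSdEx_def using learner_beats_total_learner by blast
qed

end
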